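(* For every triangle $ABC$ with $b=c>a$, we have $AX_{7}<AX_{29}<AX_{4}$; that is, in the isosceles order, $X_{7}\prec X_{29}\prec X_{4}$.
   Context: $X_n$ denotes the $n$-th triangle center listed in Kimberling's Encyclopedia of Triangle Centers (ETC), given by barycentric coordinates in terms of $a=BC$, $b=CA$, $c=AB$. The isosceles order: $P\prec Q$ if $P$ is closer to $A$ than $Q$ in every isosceles triangle $ABC$ with $b=c>a$. *)

theory Defs
  imports "HOL-Analysis.Analysis"
begin

text \<open>Points of the Euclidean plane are modelled as complex numbers.
  The point with (unnormalised) barycentric coordinates u : v : w with
  respect to the triangle ABC.\<close>
definition bary :: "complex \<Rightarrow> complex \<Rightarrow> complex \<Rightarrow> real \<Rightarrow> real \<Rightarrow> real \<Rightarrow> complex" where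
  "bary A B C u v w = (1 / (u + v + w)) *\<^sub>R (u *\<^sub>R A + v *\<^sub>R B + w *\<^sub>R C)"

definition sa :: "complex \<Rightarrow> complex \<Rightarrow> complex \<Rightarrow> real" where "sa A B C = dist B C"
definition sb :: "complex \<Rightarrow> complex \<Rightarrow> complex \<Rightarrow> real" where "sb A B C = dist C A"
definition sc :: "complex \<Rightarrow> complex \<Rightarrow> complex \<Rightarrow> real" where "sc A B C = dist A B"

text \<open>X(4), orthocenter: 1/(b^2+c^2-a^2), written polynomially.\<close>
definition f4 :: "real \<Rightarrow> real \<Rightarrow> real \<Rightarrow> real" where
  "f4 a b c = (a^2 + c^2 - b^2) * (a^2 + b^2 - c^2)"

text \<open>X(7), Gergonne point: 1/(b+c-a), written polynomially.\<close>
definition f7 :: "real \<Rightarrow> real \<Rightarrow> real \<Rightarrow> real" where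
  "f7 a b c = (a + b - c) * (a - b + c)"

text \<open>X(29), cevapoint of X(1) and X(4); trilinears sec A/(cos B + cos C),
  i.e. barycentrics S_B S_C / ((b+c)(a+b-c)(a-b+c)).\<close>
definition f29 :: "real \<Rightarrow> real \<Rightarrow> real \<Rightarrow> real" where
  "f29 a b c = (a^2 + c^2 - b^2) * (a^2 + b^2 - c^2) / ((b + c) * (a + b - c) * (a - b + c))"

definition center :: "(real \<Rightarrow> real \<Rightarrow> real \<Rightarrow> real) \<Rightarrow> complex \<Rightarrow> complex \<Rightarrow> complex \<Rightarrow> complex" where
  "center f A B C = (let a = sa A B C; b = sb A B C; c = sc A B C
     in bary A B C (f a b c) (f b c a) (f c a b))"

definition X4 where "X4 = center f4"
definition X7 where "X7 = center f7"
definition X29 where "X29 = center f29"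

end

theory Submission
  imports Defs
begin

text \<open>When \<open>b = c\<close>, a centre whose centre function is symmetric in its last two
  arguments has barycentrics \<open>p : q : q\<close>, so it lies on the median \<open>AM\<close> at
  \<open>A + 2q/(p + 2q) (M - A)\<close>. For positive weights its distance from \<open>A\<close> therefore
  decreases as the weight ratio \<open>p/q\<close> grows. These ratios are \<open>a/(2b - a)\<close> for
  \<open>X\<^sub>7\<close>, \<open>a(a + b)(2b - a) / (2b(2b\<^sup>2 - a\<^sup>2))\<close> for \<open>X\<^sub>2\<^sub>9\<close> and
  \<open>a\<^sup>2/(2b\<^sup>2 - a\<^sup>2)\<close> for \<open>X\<^sub>4\<close>; comparing them comes down to
  \<open>a\<^sup>2(b - a) > 0\<close> and \<open>(b - a)(2b + a) > 0\<close>.\<close>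

lemma dist_bary_symmetric:
  fixes A B C :: complex
  assumes "p + 2 * q \<noteq> 0"
  shows "dist A (bary A B C p q q) = \<bar>2 * q / (p + 2 * q)\<bar> * dist A (midpoint B C)"
proof -
  have "p *\<^sub>R A + q *\<^sub>R B + q *\<^sub>R C = (p + 2 * q) *\<^sub>R A + (2 * q) *\<^sub>R (midpoint B C - A)"
    unfolding midpoint_def by (simp add: algebra_simps)
  then have "bary A B C p q q - A = (2 * q / (p + 2 * q)) *\<^sub>R (midpoint B C - A)"
    unfolding bary_def using assms by (simp add: scaleR_add_right add.commute)
  then have "dist (bary A B C p q q) A = \<bar>2 * q / (p + 2 * q)\<bar> * dist (midpoint B C) A"
    by (simp add: dist_norm)
  then show ?thesis
    by (simp add: dist_commute)
qed

lemma median_fraction_less: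
  fixes p q p' q' :: real
  assumes "0 < p" "0 < q" "0 < p'" "0 < q'" and "p' / q' < p / q"
  shows "2 * q / (p + 2 * q) < 2 * q' / (p' + 2 * q')"
  using assms by (simp add: divide_simps algebra_simps)

lemma dist_center_isosceles_less:
  fixes A B C :: complex
  defines "a \<equiv> sa A B C" and "b \<equiv> sb A B C"
  assumes "A \<noteq> midpoint B C" and "sb A B C = sc A B C"
    and f_swap: "\<And>x y z. f x y z = f x z y" and g_swap: "\<And>x y z. g x y z = g x z y"
    and "0 < f a b b" "0 < f b b a" "0 < g a b b" "0 < g b b a"
    and "g a b b / g b b a < f a b b / f b b a"
  shows "dist A (center f A B C) < dist A (center g A B C)"
proof -
  have center_eq: "center h A B C = bary A B C (h a b b) (h b b a) (h b b a)"
    if "\<And>x y z. h x y z = h x z y" for h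
    using assms(4) that[of b a b] unfolding center_def a_def b_def by (simp add: Let_def)
  have "dist A (center f A B C) = 2 * f b b a / (f a b b + 2 * f b b a) * dist A (midpoint B C)"
    using dist_bary_symmetric[of "f a b b" "f b b a" A B C] assms(7,8)
    by (simp add: center_eq[OF f_swap])
  also have "\<dots> < 2 * g b b a / (g a b b + 2 * g b b a) * dist A (midpoint B C)"
    using mult_strict_right_mono[OF median_fraction_less[OF assms(7-11)]] assms(3) by simp
  also have "\<dots> = dist A (center g A B C)"
    using dist_bary_symmetric[of "g a b b" "g b b a" A B C] assms(9,10)
    by (simp add: center_eq[OF g_swap])
  finally show ?thesis .
qed

lemma f4_swap: "f4 x y z = f4 x z y"
  unfolding f4_def by (simp add: algebra_simps)

lemma f7_swap: "f7 x y z = f7 x z y"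
  unfolding f7_def by (simp add: algebra_simps)

lemma f29_swap: "f29 x y z = f29 x z y"
  unfolding f29_def by (simp add: algebra_simps)

lemma f4_isosceles: "f4 a b b = a ^ 4" "f4 b b a = a\<^sup>2 * (2 * b\<^sup>2 - a\<^sup>2)"
  unfolding f4_def by (simp_all add: algebra_simps power2_eq_square power4_eq_xxxx)

lemma f7_isosceles: "f7 a b b = a\<^sup>2" "f7 b b a = a * (2 * b - a)"
  unfolding f7_def by (simp_all add: algebra_simps power2_eq_square)

text \<open>Both identities also hold at \<open>a = 0\<close>, where both sides are \<open>0\<close> because \<open>x / 0 = 0\<close>.\<close>
lemma f29_isosceles:
  "f29 a b b = a\<^sup>2 / (2 * b)" "f29 b b a = a * (2 * b\<^sup>2 - a\<^sup>2) / ((a + b) * (2 * b - a))"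
proof -
  have "f29 a b b = a * a\<^sup>2 / (a * (2 * b))"
    unfolding f29_def by (simp add: algebra_simps power2_eq_square power4_eq_xxxx)
  then show "f29 a b b = a\<^sup>2 / (2 * b)"
    by (simp add: mult_divide_mult_cancel_left_if)
  have "f29 b b a = a * (a * (2 * b\<^sup>2 - a\<^sup>2)) / (a * ((a + b) * (2 * b - a)))"
    unfolding f29_def by (simp add: algebra_simps power2_eq_square)
  then show "f29 b b a = a * (2 * b\<^sup>2 - a\<^sup>2) / ((a + b) * (2 * b - a))"
    by (simp add: mult_divide_mult_cancel_left_if)
qed

lemma isosceles_base_bounds:
  fixes a b :: real
  assumes "0 < a" "a < b"
  shows "0 < 2 * b - a" "0 < 2 * b\<^sup>2 - a\<^sup>2"
proof -
  show "0 < 2 * b - a"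
    using assms by linarith
  have "a\<^sup>2 < b\<^sup>2" "0 < b\<^sup>2"
    using assms by (simp_all add: power_strict_mono)
  then show "0 < 2 * b\<^sup>2 - a\<^sup>2"
    by linarith
qed

lemma isosceles_weights_pos:
  fixes a b :: real
  assumes "0 < a" "a < b"
  shows "0 < f4 a b b" "0 < f4 b b a" "0 < f7 a b b" "0 < f7 b b a"
    "0 < f29 a b b" "0 < f29 b b a"
  using isosceles_base_bounds[OF assms] assms
  by (simp_all add: f4_isosceles f7_isosceles f29_isosceles)

lemma isosceles_weight_ratio_f29_less_f7:
  fixes a b :: real
  assumes "0 < a" "a < b"
  shows "f29 a b b / f29 b b a < f7 a b b / f7 b b a"
proof -
  note pos = isosceles_base_bounds[OF assms]
  have "2 * b * (2 * b\<^sup>2 - a\<^sup>2) - (a + b) * (2 * b - a)\<^sup>2 = a\<^sup>2 * (b - a)"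
    by (simp add: algebra_simps power2_eq_square)
  moreover have "0 < a\<^sup>2 * (b - a)"
    using assms by simp
  ultimately have "(a + b) * (2 * b - a)\<^sup>2 < 2 * b * (2 * b\<^sup>2 - a\<^sup>2)"
    by linarith
  then show ?thesis
    using assms pos by (simp add: f7_isosceles f29_isosceles divide_simps power2_eq_square)
qed

lemma isosceles_weight_ratio_f4_less_f29:
  fixes a b :: real
  assumes "0 < a" "a < b"
  shows "f4 a b b / f4 b b a < f29 a b b / f29 b b a"
proof -
  note pos = isosceles_base_bounds[OF assms]
  have "(a + b) * (2 * b - a) - 2 * a * b = (b - a) * (2 * b + a)"
    by (simp add: algebra_simps)
  moreover have "0 < (b - a) * (2 * b + a)"
    using assms by simp
  ultimately have "2 * a * b < (a + b) * (2 * b - a)"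
    by linarith
  then show ?thesis
    using assms pos
    by (simp add: f4_isosceles f29_isosceles divide_simps power2_eq_square power4_eq_xxxx)
qed

theorem theorem3p8:
  fixes A B C :: complex
  assumes "\<not> collinear {A, B, C}"
    and "sb A B C = sc A B C"
    and "sb A B C > sa A B C"
  shows "dist A (X7 A B C) < dist A (X29 A B C) \<and> dist A (X29 A B C) < dist A (X4 A B C)"
proof -
  have "B \<noteq> C"
    using assms(1) by (metis collinear_2 insert_absorb2 insert_commute)
  then have a_pos: "0 < sa A B C"
    by (simp add: sa_def)
  have "A \<noteq> midpoint B C"
    using assms(1) collinear_midpoint by (metis insert_commute)
  note isosceles_less = dist_center_isosceles_less[OF this assms(2)]
  note weights = isosceles_weights_pos[OF a_pos assms(3)]
  have "dist A (X7 A B C) < dist A (X29 A B C)"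
    unfolding X7_def X29_def
    using isosceles_less[where f = f7 and g = f29, OF f7_swap f29_swap] weights
      isosceles_weight_ratio_f29_less_f7[OF a_pos assms(3)] by blast
  moreover have "dist A (X29 A B C) < dist A (X4 A B C)"
    unfolding X29_def X4_def
    using isosceles_less[where f = f29 and g = f4, OF f29_swap f4_swap] weights
      isosceles_weight_ratio_f4_less_f29[OF a_pos assms(3)] by blast
  ultimately show ?thesis ..
qed

end
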